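(* Let $\Gamma$ be a $k$-regular graph on $n$ vertices and let $g$ be an automorphism of $\Gamma$ with no fixed vertices. Then the number of $1$-factors (perfect matchings) of $\Gamma$ that are mapped onto themselves by $g$ is at most $(8\mathrm{e}k)^{n/4}$.
   Context: A $1$-factor of a graph is a set of edges such that every vertex lies in exactly one of them. A $1$-factor $F$ is fixed by $g$ if $g(F)=F$ as a set of edges. Here $\mathrm{e}$ is Euler's number. *)

theory Defs
  imports Complex_Main
begin

definition simple_graph :: "'a set \<Rightarrow> 'a set set \<Rightarrow> bool" where
  "simple_graph V E \<longleftrightarrow> finite V \<and>
     (\<forall>e\<in>E. \<exists>u v. e = {u, v} \<and> u \<noteq> v \<and> u \<in> V \<and> v \<in> V)"

definition degree :: "'a set \<Rightarrow> 'a set set \<Rightarrow> 'a \<Rightarrow> nat" where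
  "degree V E v = card {u \<in> V. {u, v} \<in> E}"

definition regular :: "'a set \<Rightarrow> 'a set set \<Rightarrow> nat \<Rightarrow> bool" where
  "regular V E k \<longleftrightarrow> (\<forall>v\<in>V. degree V E v = k)"

definition graph_automorphism :: "'a set \<Rightarrow> 'a set set \<Rightarrow> ('a \<Rightarrow> 'a) \<Rightarrow> bool" where
  "graph_automorphism V E g \<longleftrightarrow> bij_betw g V V \<and>
     (\<forall>u\<in>V. \<forall>v\<in>V. {u, v} \<in> E \<longleftrightarrow> {g u, g v} \<in> E)"

definition one_factor :: "'a set \<Rightarrow> 'a set set \<Rightarrow> 'a set set \<Rightarrow> bool" where
  "one_factor V E F \<longleftrightarrow> F \<subseteq> E \<and> (\<forall>v\<in>V. \<exists>!e. e \<in> F \<and> v \<in> e)"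

definition fixed_by :: "('a \<Rightarrow> 'a) \<Rightarrow> 'a set set \<Rightarrow> bool" where
  "fixed_by g F \<longleftrightarrow> (\<lambda>e. g ` e) ` F = F"

end

theory Submission
  imports Defs
begin

text \<open>
  If F is a g-invariant 1-factor containing the edge {v,w}, then the whole g-orbit of {v,w}
  lies in F, and deleting it leaves a g-invariant 1-factor on the uncovered vertices. As g fixes
  no vertex, the orbit covers at least four vertices unless w = g v, when it covers two. Summing
  over the k neighbours w of v, induction bounds the number of g-invariant 1-factors on m
  vertices by k y^(m-4) + y^(m-2) \<le> y^m, whenever y \<ge> 1 and y^2 + k \<le> y^4; the choice
  y^4 = 8 e k satisfies this.
\<close>

definition iterates :: "('b \<Rightarrow> 'b) \<Rightarrow> 'b \<Rightarrow> 'b set" where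
  "iterates h x = range (\<lambda>n. (h ^^ n) x)"

lemma iterates_subset:
  assumes "x \<in> S" and "h ` S \<subseteq> S"
  shows "iterates h x \<subseteq> S"
proof -
  have "(h ^^ n) x \<in> S" for n
    by (induction n) (use assms in auto)
  then show ?thesis
    unfolding iterates_def by blast
qed

lemma image_iterates:
  assumes "finite (iterates h x)" and "inj_on h (iterates h x)"
  shows "h ` iterates h x = iterates h x"
proof (rule endo_inj_surj[OF assms(1) _ assms(2)])
  show "h ` iterates h x \<subseteq> iterates h x"
  proof
    fix y
    assume "y \<in> h ` iterates h x"
    then obtain n where "y = (h ^^ Suc n) x"
      unfolding iterates_def by auto
    then show "y \<in> iterates h x"
      unfolding iterates_def by blast
  qed
qed

lemma one_factor_Diff:
  assumes F: "one_factor W E F" "\<Union>F \<subseteq> W" and D: "D \<subseteq> F"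
  shows "one_factor (W - \<Union>D) E (F - D)" and "\<Union>(F - D) \<subseteq> W - \<Union>D"
proof -
  have unique: "\<And>u e d. e \<in> F \<Longrightarrow> d \<in> F \<Longrightarrow> u \<in> e \<Longrightarrow> u \<in> d \<Longrightarrow> e = d"
    using F unfolding one_factor_def by blast
  show "\<Union>(F - D) \<subseteq> W - \<Union>D"
    using F(2) D unique by blast
  show "one_factor (W - \<Union>D) E (F - D)"
    using F D unique unfolding one_factor_def by blast
qed

lemma fixed_by_Diff:
  assumes "fixed_by g F" "fixed_by g D" "D \<subseteq> F" "inj_on g (\<Union>F)"
  shows "fixed_by g (F - D)"
proof -
  have "inj_on (image g) F"
    using inj_on_image_Pow[OF assms(4)] by (rule inj_on_subset) blast
  then have "image g ` (F - D) = image g ` F - image g ` D"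
    using assms(3) by (intro inj_on_image_set_diff) auto
  then show ?thesis
    using assms(1,2) unfolding fixed_by_def by simp
qed

definition invariant_matchings :: "'a set set \<Rightarrow> ('a \<Rightarrow> 'a) \<Rightarrow> 'a set \<Rightarrow> 'a set set set" where
  "invariant_matchings E g W = {F. one_factor W E F \<and> \<Union>F \<subseteq> W \<and> fixed_by g F}"

lemma finite_invariant_matchings:
  assumes "finite W"
  shows "finite (invariant_matchings E g W)"
proof (rule finite_subset)
  show "invariant_matchings E g W \<subseteq> Pow (Pow W)"
    unfolding invariant_matchings_def by blast
qed (use assms in simp)

lemma card_invariant_matchings_empty:
  assumes "simple_graph V E"
  shows "card (invariant_matchings E g {}) \<le> 1"
proof -
  have "{} \<notin> E"
    using assms unfolding simple_graph_def by blast
  then have "invariant_matchings E g {} \<subseteq> {{}}"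
    unfolding invariant_matchings_def one_factor_def by auto
  then show ?thesis
    using card_mono[of "{{}}" "invariant_matchings E g {}"] by simp
qed

lemma invariant_matchings_Diff_orbit:
  assumes F: "F \<in> invariant_matchings E g W" and e: "e \<in> F"
    and W: "finite W" "inj_on g W"
  defines "D \<equiv> iterates (image g) e"
  shows "D \<subseteq> F" and "F - D \<in> invariant_matchings E g (W - \<Union>D)"
proof -
  have F': "one_factor W E F" "\<Union>F \<subseteq> W" "image g ` F = F"
    using F unfolding invariant_matchings_def fixed_by_def by auto
  show DF: "D \<subseteq> F"
    unfolding D_def using e F'(3) by (intro iterates_subset) auto
  have inj: "inj_on g (\<Union>F)"
    using W(2) F'(2) by (rule inj_on_subset)
  have "finite D"
    using DF F'(2) W(1) by (meson Sup_le_iff finite_Pow_iff finite_subset subset_Pow_Union)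
  moreover have "inj_on (image g) D"
    using inj_on_image_Pow[OF inj] by (rule inj_on_subset) (use DF in blast)
  ultimately have "fixed_by g D"
    unfolding fixed_by_def D_def by (rule image_iterates[unfolded D_def])
  then have "fixed_by g (F - D)"
    using F DF inj unfolding invariant_matchings_def by (intro fixed_by_Diff) auto
  then show "F - D \<in> invariant_matchings E g (W - \<Union>D)"
    using one_factor_Diff[OF F'(1,2) DF] unfolding invariant_matchings_def by blast
qed

lemma card_invariant_matchings_containing:
  assumes "finite W" "inj_on g W"
  shows "card {F \<in> invariant_matchings E g W. e \<in> F}
           \<le> card (invariant_matchings E g (W - \<Union>(iterates (image g) e)))"
proof -
  let ?D = "iterates (image g) e"
  have "inj_on (\<lambda>F. F - ?D) {F \<in> invariant_matchings E g W. e \<in> F}"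
  proof (rule inj_onI)
    fix F1 F2
    assume "F1 \<in> {F \<in> invariant_matchings E g W. e \<in> F}" "F2 \<in> {F \<in> invariant_matchings E g W. e \<in> F}"
      and "F1 - ?D = F2 - ?D"
    then show "F1 = F2"
      using invariant_matchings_Diff_orbit(1)[OF _ _ assms] by blast
  qed
  then show ?thesis
    using invariant_matchings_Diff_orbit(2)[OF _ _ assms]
    by (intro card_inj_on_le finite_invariant_matchings) (use assms in auto)
qed

lemma card_Union_orbit_ge:
  assumes F: "F \<in> invariant_matchings E g W" and vw: "{v, w} \<in> F"
    and W: "finite W" "inj_on g W"
    and "v \<noteq> w" "g v \<noteq> v" "g w \<noteq> w"
  shows "(if w = g v then 2 else 4) \<le> card (\<Union>(iterates (image g) {v, w}))"
proof -
  let ?U = "\<Union>(iterates (image g) {v, w})"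
  have DF: "iterates (image g) {v, w} \<subseteq> F"
    using invariant_matchings_Diff_orbit(1)[OF F vw W] .
  have FW: "\<Union>F \<subseteq> W" and unique: "\<And>u e d. e \<in> F \<Longrightarrow> d \<in> F \<Longrightarrow> u \<in> e \<Longrightarrow> u \<in> d \<Longrightarrow> e = d"
    using F unfolding invariant_matchings_def one_factor_def by blast+
  have "{v, w} \<in> iterates (image g) {v, w}" "{g v, g w} \<in> iterates (image g) {v, w}"
    unfolding iterates_def by (auto intro: range_eqI[of _ _ 0] range_eqI[of _ _ 1])
  then have sub: "{v, w, g v, g w} \<subseteq> ?U"
    by blast
  have fin: "finite ?U"
    using DF FW W(1) by (meson Union_mono finite_subset)
  have "g w \<noteq> v" if "w \<noteq> g v"
  proof
    assume "g w = v"
    then have "{g v, g w} = {v, w}"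
      using unique[of "{g v, g w}" "{v, w}" v] \<open>{g v, g w} \<in> _\<close> DF vw by blast
    then show False
      using \<open>g w = v\<close> \<open>g v \<noteq> v\<close> that by (auto simp: doubleton_eq_iff)
  qed
  moreover have "g v \<noteq> g w"
    using W(2) FW vw \<open>v \<noteq> w\<close> by (meson Union_upper inj_onD insertCI subsetD)
  ultimately have "(if w = g v then 2 else 4) \<le> card {v, w, g v, g w}"
  proof (cases "w = g v")
    case True
    have "card {v, w} \<le> card {v, w, g v, g w}"
      by (intro card_mono) auto
    then show ?thesis
      using True \<open>v \<noteq> w\<close> by simp
  qed (use assms(5-7) in auto)
  also have "\<dots> \<le> card ?U"
    using sub fin by (rule card_mono[rotated])
  finally show ?thesis .
qed

lemma invariant_matchings_subset_UN_neighbours: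
  assumes "simple_graph V E" and "v \<in> W"
  shows "invariant_matchings E g W
           \<subseteq> (\<Union>w\<in>{u \<in> V. {u, v} \<in> E}. {F \<in> invariant_matchings E g W. {v, w} \<in> F})"
proof
  fix F
  assume F: "F \<in> invariant_matchings E g W"
  then obtain e where "e \<in> F" "v \<in> e" "e \<in> E"
    using assms(2) unfolding invariant_matchings_def one_factor_def by blast
  moreover obtain a b where "e = {a, b}" "a \<in> V" "b \<in> V"
    using assms(1) \<open>e \<in> E\<close> unfolding simple_graph_def by blast
  ultimately obtain w where "e = {v, w}" "w \<in> V"
    by blast
  then show "F \<in> (\<Union>w\<in>{u \<in> V. {u, v} \<in> E}. {F \<in> invariant_matchings E g W. {v, w} \<in> F})"
    using F \<open>e \<in> F\<close> \<open>e \<in> E\<close> by (auto simp: insert_commute)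
qed

lemma power_diff_le_divide:
  fixes y :: real
  assumes "y \<ge> 1" "m \<le> d" "d \<le> c"
  shows "y ^ (c - d) \<le> y ^ c / y ^ m"
proof -
  have "y ^ (c - d) * y ^ m = y ^ (c - d + m)"
    by (simp add: power_add)
  also have "\<dots> \<le> y ^ c"
    using assms by (intro power_increasing) auto
  finally show ?thesis
    using assms(1) by (simp add: pos_le_divide_eq)
qed

lemma card_invariant_matchings_le_sum_neighbours:
  assumes "simple_graph V E" "finite W" "v \<in> W"
  shows "card (invariant_matchings E g W)
           \<le> (\<Sum>w\<in>{u \<in> V. {u, v} \<in> E}. card {F \<in> invariant_matchings E g W. {v, w} \<in> F})"
proof -
  let ?N = "{u \<in> V. {u, v} \<in> E}"
  have "finite (\<Union>w\<in>?N. {F \<in> invariant_matchings E g W. {v, w} \<in> F})"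
    by (rule finite_subset[OF _ finite_invariant_matchings[OF assms(2)]]) auto
  then have "card (invariant_matchings E g W)
               \<le> card (\<Union>w\<in>?N. {F \<in> invariant_matchings E g W. {v, w} \<in> F})"
    using invariant_matchings_subset_UN_neighbours[OF assms(1,3)] by (rule card_mono)
  also have "\<dots> \<le> (\<Sum>w\<in>?N. card {F \<in> invariant_matchings E g W. {v, w} \<in> F})"
    using assms(1) unfolding simple_graph_def by (intro card_UN_le) auto
  finally show ?thesis .
qed

lemma card_invariant_matchings_containing_edge:
  assumes G: "simple_graph V E" and g: "inj_on g V" "\<forall>v\<in>V. g v \<noteq> v"
    and W: "W \<subseteq> V" "v \<in> W" and vw: "{v, w} \<in> E"
    and nonempty: "{F \<in> invariant_matchings E g W. {v, w} \<in> F} \<noteq> {}"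
  obtains U where "U \<subseteq> W" "(if w = g v then 2 else 4) \<le> card U"
    "card {F \<in> invariant_matchings E g W. {v, w} \<in> F} \<le> card (invariant_matchings E g (W - U))"
proof
  let ?U = "\<Union>(iterates (image g) {v, w})"
  have fin: "finite W" "inj_on g W"
    using G g(1) W(1) by (auto simp: simple_graph_def intro: finite_subset inj_on_subset)
  obtain F where F: "F \<in> invariant_matchings E g W" "{v, w} \<in> F"
    using nonempty by blast
  have "v \<noteq> w" "w \<in> V"
    using vw G unfolding simple_graph_def by (auto simp: doubleton_eq_iff)
  then show "(if w = g v then 2 else 4) \<le> card ?U"
    using card_Union_orbit_ge[OF F fin] g(2) W by auto
  show "?U \<subseteq> W"
    using invariant_matchings_Diff_orbit(1)[OF F fin] F(1) unfolding invariant_matchings_def by blast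
  show "card {F \<in> invariant_matchings E g W. {v, w} \<in> F} \<le> card (invariant_matchings E g (W - ?U))"
    using card_invariant_matchings_containing[OF fin] .
qed

lemma card_invariant_matchings_le_power:
  fixes y :: real
  assumes G: "simple_graph V E" "regular V E k"
    and g: "inj_on g V" "\<forall>v\<in>V. g v \<noteq> v"
    and y: "y \<ge> 1" "y ^ 2 + real k \<le> y ^ 4"
    and "W \<subseteq> V"
  shows "real (card (invariant_matchings E g W)) \<le> y ^ card W"
  using \<open>W \<subseteq> V\<close>
proof (induction "card W" arbitrary: W rule: less_induct)
  case less
  have "finite W"
    using less.prems G(1) finite_subset unfolding simple_graph_def by blast
  show ?case
  proof (cases "W = {}")
    case True
    then show ?thesis
      using card_invariant_matchings_empty[OF G(1)] by simp
  next
    case False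
    then obtain v where v: "v \<in> W"
      by blast
    define N where "N = {u \<in> V. {u, v} \<in> E}"
    let ?M = "invariant_matchings E g"
    let ?c = "card W"
    have N: "finite N" "card N = k"
      using G less.prems v unfolding N_def simple_graph_def regular_def degree_def by auto
    have through: "real (card {F \<in> ?M W. {v, w} \<in> F}) \<le> y ^ ?c / y ^ (if w = g v then 2 else 4)"
      if "w \<in> N" for w
    proof (cases "{F \<in> ?M W. {v, w} \<in> F} = {}")
      case True
      then show ?thesis
        using y(1) by (simp only: True) simp
    next
      case False
      moreover have "{v, w} \<in> E"
        using \<open>w \<in> N\<close> unfolding N_def by (simp add: insert_commute)
      ultimately obtain U where U: "U \<subseteq> W" "(if w = g v then 2 else 4) \<le> card U"
        and card_le: "card {F \<in> ?M W. {v, w} \<in> F} \<le> card (?M (W - U))"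
        using card_invariant_matchings_containing_edge[OF G(1) g less.prems v] by blast
      have card_U: "card U \<le> ?c" "card (W - U) = ?c - card U"
        using U(1) \<open>finite W\<close> by (auto intro: card_mono simp: card_Diff_subset finite_subset)
      moreover have "2 \<le> card U"
        using U(2) by (auto split: if_splits)
      ultimately have "card (W - U) < ?c"
        by linarith
      then have "real (card (?M (W - U))) \<le> y ^ (?c - card U)"
        using less.hyps[of "W - U"] less.prems card_U by auto
      also have "\<dots> \<le> y ^ ?c / y ^ (if w = g v then 2 else 4)"
        using y(1) U(2) card_U by (intro power_diff_le_divide) auto
      finally show ?thesis
        using card_le by linarith
    qed
    have "real (card (?M W)) \<le> (\<Sum>w\<in>N. real (card {F \<in> ?M W. {v, w} \<in> F}))"
      using card_invariant_matchings_le_sum_neighbours[OF G(1) \<open>finite W\<close> v, of g]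
      unfolding N_def[symmetric] of_nat_sum[symmetric] of_nat_le_iff .
    also have "\<dots> \<le> (\<Sum>w\<in>N. y ^ ?c / y ^ 4 + (if w = g v then y ^ ?c / y ^ 2 else 0))"
    proof (rule sum_mono)
      fix w
      assume "w \<in> N"
      have "y ^ ?c / y ^ (if w = g v then 2 else 4)
              \<le> y ^ ?c / y ^ 4 + (if w = g v then y ^ ?c / y ^ 2 else 0)"
        using y(1) by simp
      then show "real (card {F \<in> ?M W. {v, w} \<in> F})
                   \<le> y ^ ?c / y ^ 4 + (if w = g v then y ^ ?c / y ^ 2 else 0)"
        using through[OF \<open>w \<in> N\<close>] by linarith
    qed
    also have "\<dots> \<le> real k * (y ^ ?c / y ^ 4) + y ^ ?c / y ^ 2"
      using N y(1) by (simp add: sum.distrib sum.delta)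
    also have "\<dots> = y ^ ?c * ((y ^ 2 + real k) / y ^ 4)"
      using y(1) by (simp add: field_simps power_add[symmetric] eval_nat_numeral)
    also have "\<dots> \<le> y ^ ?c"
      by (intro mult_left_le) (use y in \<open>simp_all add: divide_le_eq_1\<close>)
    finally show ?thesis .
  qed
qed

lemma sqrt_add_le:
  fixes t k :: real
  assumes "4 \<le> t" "2 * k \<le> t"
  shows "sqrt t + k \<le> t"
proof -
  have "2 * sqrt t \<le> sqrt t * sqrt t"
    using assms(1) real_sqrt_le_mono[of 4 t] by (intro mult_right_mono) auto
  then show ?thesis
    using assms by simp
qed

lemma invariant_matchings_regular_0:
  assumes "simple_graph V E" "regular V E 0" "v \<in> V"
  shows "invariant_matchings E g V = {}"
proof -
  have "finite V"
    using assms(1) unfolding simple_graph_def by blast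
  then have "{u \<in> V. {u, v} \<in> E} = {}"
    using assms(2,3) unfolding regular_def degree_def by auto
  then show ?thesis
    using invariant_matchings_subset_UN_neighbours[OF assms(1,3)] by blast
qed

lemma card_invariant_matchings_power_4_le:
  assumes G: "simple_graph V E" "regular V E k"
    and g: "inj_on g V" "\<forall>v\<in>V. g v \<noteq> v"
    and "k \<ge> 1"
  shows "real (card (invariant_matchings E g V)) ^ 4 \<le> (8 * exp 1 * real k) ^ card V"
proof -
  define t where "t = 8 * exp 1 * real k"
  define y where "y = sqrt (sqrt t)"
  have e: "2 \<le> exp (1::real)"
    using exp_ge_add_one_self[of 1] by simp
  have "8 * 2 * 1 \<le> t"
    unfolding t_def using e \<open>k \<ge> 1\<close> by (intro mult_mono) auto
  then have t: "16 \<le> t"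
    by simp
  then have "y ^ 2 = sqrt t" "y \<ge> 1"
    unfolding y_def by simp_all
  moreover have "y ^ 4 = t"
  proof -
    have "y ^ 4 = (y ^ 2) ^ 2"
      by simp
    then show ?thesis
      using \<open>y ^ 2 = sqrt t\<close> t by simp
  qed
  moreover have "sqrt t + real k \<le> t"
    using t mult_left_mono[OF e, of "real k"] unfolding t_def by (intro sqrt_add_le) auto
  ultimately have "real (card (invariant_matchings E g V)) \<le> y ^ card V"
    using card_invariant_matchings_le_power[OF G g, of y V] by simp
  then have "real (card (invariant_matchings E g V)) ^ 4 \<le> (y ^ card V) ^ 4"
    by (rule power_mono) simp
  also have "\<dots> = t ^ card V"
    unfolding \<open>y ^ 4 = t\<close>[symmetric] by (simp flip: power_mult add: mult.commute)
  finally show ?thesis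
    unfolding t_def .
qed

theorem mainTheorem2:
  fixes V :: "'a set" and E :: "'a set set" and g :: "'a \<Rightarrow> 'a" and k n :: nat
  assumes "simple_graph V E"
    and "card V = n"
    and "regular V E k"
    and "graph_automorphism V E g"
    and "\<forall>v\<in>V. g v \<noteq> v"
  shows "real (card {F. one_factor V E F \<and> fixed_by g F}) ^ 4 \<le> (8 * exp 1 * real k) ^ n"
proof -
  have inj: "inj_on g V"
    using assms(4) unfolding graph_automorphism_def bij_betw_def by blast
  have "\<Union>E \<subseteq> V"
    using assms(1) unfolding simple_graph_def by auto
  then have "{F. one_factor V E F \<and> fixed_by g F} = invariant_matchings E g V"
    unfolding invariant_matchings_def one_factor_def by blast
  moreover consider "V = {}" | v where "v \<in> V" "k = 0" | "k \<ge> 1"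
    by (cases "k = 0") auto
  then have "real (card (invariant_matchings E g V)) ^ 4 \<le> (8 * exp 1 * real k) ^ n"
  proof cases
    case 1
    then show ?thesis
      using card_invariant_matchings_empty[OF assms(1), of g] assms(2) by (simp add: power_le_one)
  next
    case 2
    then show ?thesis
      using invariant_matchings_regular_0[OF assms(1)] assms(3) by simp
  next
    case 3
    then show ?thesis
      using card_invariant_matchings_power_4_le[OF assms(1,3) inj assms(5)] assms(2) by simp
  qed
  ultimately show ?thesis
    by simp
qed

end
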